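(* Let $\mathrm A$ and $\mathrm F$ be nontrivial systems of Bilocal Classical Theory (BCT), let $\rho=\sum_ip_i|i)_{\mathrm A}$ be a deterministic state of $\mathrm A$, and let $\Psi=\sum_{i,j,s}q_{ijs}|(ij)_s)_{\mathrm{AF}}$ be a deterministic state of $\mathrm{AF}$ that is a dilation of $\rho$. Let $\mathrm E$ be the system of the same size as $\mathrm A$ and let $\Pi=\sum_{i,k,s}p_{iks}|(ik)_s)_{\mathrm{AE}}$ with $p_{ik+}=\delta_{ik}p_i$ and $p_{ik-}=0$ (i.e. $\Pi=\sum_ip_i|(ii)_+)_{\mathrm{AE}}$). Then there exists a channel $\mathcal C\in\mathsf{Tr}_1(\mathrm E\to\mathrm F)$ such that $(\mathcal I_{\mathrm A}\boxtimes\mathcal C)\Pi=\Psi$.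
   Context: BCT is an operational probabilistic theory with the following structure. Systems: a trivial system $\mathrm I$ and, for every integer $D>1$, exactly one system of size $D$. For a nontrivial system $\mathrm A$ of size $D_{\mathrm A}$, every state is a nonnegative combination $\sum_i p_i|i)_{\mathrm A}$ of the $D_{\mathrm A}$ pure states $|i)_{\mathrm A}$, which are the affinely independent vertices of the simplex of deterministic states (deterministic iff $\sum_ip_i=1$); each system has a unique deterministic effect $e_{\mathrm A}$ with $(e_{\mathrm A}|i)_{\mathrm A}=1$. For nontrivial $\mathrm A,\mathrm B$, the composite $\mathrm{AB}$ has size $2D_{\mathrm A}D_{\mathrm B}$ and pure states $|(ij)_s)_{\mathrm{AB}}$, $1\le i\le D_{\mathrm A}$, $1\le j\le D_{\mathrm B}$, $s\in\{+,-\}$; $|i)_{\mathrm A}\boxtimes|j)_{\mathrm B}=\tfrac12\sum_{s=\pm}|(ij)_s)_{\mathrm{AB}}$. Transformations act linearly. Channels $\mathcal C\in\mathsf{Tr}_1(\mathrm E\to\mathrm F)$ between nontrivial systems are exactly those for which, for each $k\in\{1,\dots,D_{\mathrm E}\}$, there is a probability distribution $\{\lambda^{(k)}_{j\tau}\}$ over $(j,\tau)\in\{1,\dots,D_{\mathrm F}\}\times\{+,-\}$ with $(\mathcal I_{\mathrm A}\boxtimes\mathcal C)|(ik)_s)_{\mathrm{AE}}=\sum_{j,\tau}\lambda^{(k)}_{j\tau}|(ij)_{\tau s})_{\mathrm{AF}}$ for every system $\mathrm A$ and all $i,k,s$ (signs multiply as $\pm1$). A dilation of a state $\rho$ of $\mathrm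 A$ is a state $\Psi$ of $\mathrm{AF}$ with $(\mathcal I_{\mathrm A}\boxtimes e_{\mathrm F})\Psi=\rho$. *)

theory Defs
  imports Complex_Main
begin

text \<open>A nontrivial system of size D has pure
states indexed by {1..D}; a state is its (unique) coefficient vector
p :: nat \<Rightarrow> real on {1..D}.  A composite AB of nontrivial systems has pure states
(ij)_s indexed by i in {1..DA}, j in {1..DB}, s a sign; a state is a coefficient
function q :: nat \<Rightarrow> nat \<Rightarrow> sgn \<Rightarrow> real.\<close>

datatype sgn = Pos | Neg

definition signs :: "sgn set" where "signs = {Pos, Neg}"

fun sgn_mult :: "sgn \<Rightarrow> sgn \<Rightarrow> sgn" where
  "sgn_mult Pos s = s"
| "sgn_mult Neg Pos = Neg"
| "sgn_mult Neg Neg = Pos"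

definition det_state :: "nat \<Rightarrow> (nat \<Rightarrow> real) \<Rightarrow> bool" where
  "det_state D p \<longleftrightarrow> (\<forall>i\<in>{1..D}. 0 \<le> p i) \<and> (\<Sum>i\<in>{1..D}. p i) = 1"

definition det_state2 :: "nat \<Rightarrow> nat \<Rightarrow> (nat \<Rightarrow> nat \<Rightarrow> sgn \<Rightarrow> real) \<Rightarrow> bool" where
  "det_state2 DA DB q \<longleftrightarrow>
     (\<forall>i\<in>{1..DA}. \<forall>j\<in>{1..DB}. \<forall>s\<in>signs. 0 \<le> q i j s) \<and>
     (\<Sum>i\<in>{1..DA}. \<Sum>j\<in>{1..DB}. \<Sum>s\<in>signs. q i j s) = 1"

text \<open>Marginal (I_A \<boxtimes> e_F) applied to a state of AF: each pure state (ij)_s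
is mapped to |i)_A.\<close>
definition marginal :: "nat \<Rightarrow> (nat \<Rightarrow> nat \<Rightarrow> sgn \<Rightarrow> real) \<Rightarrow> nat \<Rightarrow> real" where
  "marginal DF q i = (\<Sum>j\<in>{1..DF}. \<Sum>s\<in>signs. q i j s)"

definition is_dilation :: "nat \<Rightarrow> nat \<Rightarrow> (nat \<Rightarrow> real) \<Rightarrow> (nat \<Rightarrow> nat \<Rightarrow> sgn \<Rightarrow> real) \<Rightarrow> bool" where
  "is_dilation DA DF rho q \<longleftrightarrow> (\<forall>i\<in>{1..DA}. marginal DF q i = rho i)"

text \<open>A channel E \<rightarrow> F is given by its data lambda: for every k in {1..DE},
a probability distribution lambda k j tau over (j,tau) in {1..DF} \<times> signs.\<close>
definition is_channel :: "nat \<Rightarrow> nat \<Rightarrow> (nat \<Rightarrow> nat \<Rightarrow> sgn \<Rightarrow> real) \<Rightarrow> bool" where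
  "is_channel DE DF lam \<longleftrightarrow>
     (\<forall>k\<in>{1..DE}. (\<forall>j\<in>{1..DF}. \<forall>t\<in>signs. 0 \<le> lam k j t) \<and>
                  (\<Sum>j\<in>{1..DF}. \<Sum>t\<in>signs. lam k j t) = 1)"

text \<open>Coefficients of (I_A \<boxtimes> C) P for a state P of AE, extended linearly from
(I_A \<boxtimes> C)|(ik)_s) = \<Sum>_{j,tau} lam k j tau |(ij)_{tau s}).\<close>
definition apply_channel ::
  "nat \<Rightarrow> nat \<Rightarrow> (nat \<Rightarrow> nat \<Rightarrow> sgn \<Rightarrow> real) \<Rightarrow> (nat \<Rightarrow> nat \<Rightarrow> sgn \<Rightarrow> real)
     \<Rightarrow> nat \<Rightarrow> nat \<Rightarrow> sgn \<Rightarrow> real" where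
  "apply_channel DE DF lam P i j s =
     (\<Sum>k\<in>{1..DE}. \<Sum>s'\<in>signs. \<Sum>t\<in>signs.
        (if sgn_mult t s' = s then P i k s' * lam k j t else 0))"

definition Pi_state :: "(nat \<Rightarrow> real) \<Rightarrow> nat \<Rightarrow> nat \<Rightarrow> sgn \<Rightarrow> real" where
  "Pi_state p i k s = (if s = Pos \<and> i = k then p i else 0)"

end

theory Submission
  imports Defs
begin

text \<open>Applying I \<boxtimes> C to \<Pi> = \<Sum>_i p_i |(ii)_+) gives the coefficients p_i \<lambda>^(i)_{js}, so \<Psi> is
reached by the channel that prepares the conditional distribution
\<lambda>^(k)_{j\<tau>} = q_{kj\<tau>} / p_k of \<Psi> given the outcome k on A; when p_k = 0 the row q_k
vanishes by positivity and any distribution for \<lambda>^(k) will do.  Since \<Psi> dilates \<rho>,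
p_k = \<Sum>_{j,\<tau>} q_{kj\<tau>}, so the channel is built from \<Psi> alone.\<close>

lemma apply_channel_Pi_state:
  assumes "i \<in> {1..DE}"
  shows "apply_channel DE DF lam (Pi_state p) i j s = p i * lam i j s"
proof -
  have "(\<Sum>s'\<in>signs. \<Sum>t\<in>signs.
          (if sgn_mult t s' = s then Pi_state p i k s' * lam k j t else 0))
        = (if k = i then p i * lam i j s else 0)" for k
    by (cases s) (auto simp: signs_def Pi_state_def)
  then have "apply_channel DE DF lam (Pi_state p) i j s =
      (\<Sum>k\<in>{1..DE}. if k = i then p i * lam i j s else 0)"
    unfolding apply_channel_def by simp
  also have "\<dots> = p i * lam i j s"
    using assms by simp
  finally show ?thesis .
qed

definition conditional_channel :: "nat \<Rightarrow> (nat \<Rightarrow> nat \<Rightarrow> sgn \<Rightarrow> real) \<Rightarrow> nat \<Rightarrow> nat \<Rightarrow> sgn \<Rightarrow> real" where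
  "conditional_channel DF q k j t =
     (if marginal DF q k = 0 then (if j = 1 \<and> t = Pos then 1 else 0)
      else q k j t / marginal DF q k)"

lemma marginal_nonneg:
  assumes "\<forall>j\<in>{1..DF}. \<forall>s\<in>signs. 0 \<le> q i j s"
  shows "0 \<le> marginal DF q i"
  unfolding marginal_def using assms by (auto intro!: sum_nonneg)

lemma marginal_eq_0_imp_eq_0:
  assumes nonneg: "\<forall>j\<in>{1..DF}. \<forall>s\<in>signs. 0 \<le> q i j s"
    and "marginal DF q i = 0" and "j \<in> {1..DF}" and "s \<in> signs"
  shows "q i j s = 0"
proof -
  have "\<forall>j\<in>{1..DF}. (\<Sum>s\<in>signs. q i j s) = 0"
    using assms(2) nonneg unfolding marginal_def
    by (subst (asm) sum_nonneg_eq_0_iff) (auto intro: sum_nonneg simp: signs_def)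
  then have "(\<Sum>s\<in>signs. q i j s) = 0"
    using assms(3) by blast
  then show ?thesis
    using nonneg assms(3,4) by (subst (asm) sum_nonneg_eq_0_iff) (auto simp: signs_def)
qed

lemma is_channel_conditional_channel:
  assumes "1 \<le> DF"
    and nonneg: "\<forall>k\<in>{1..DE}. \<forall>j\<in>{1..DF}. \<forall>s\<in>signs. 0 \<le> q k j s"
  shows "is_channel DE DF (conditional_channel DF q)"
  unfolding is_channel_def
proof (intro ballI conjI)
  fix k j t
  assume "k \<in> {1..DE}" "j \<in> {1..DF}" "t \<in> signs"
  then show "0 \<le> conditional_channel DF q k j t"
    using nonneg marginal_nonneg[of DF q k] unfolding conditional_channel_def by auto
next
  fix k
  assume "k \<in> {1..DE}"
  show "(\<Sum>j\<in>{1..DF}. \<Sum>t\<in>signs. conditional_channel DF q k j t) = 1"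
  proof (cases "marginal DF q k = 0")
    case True
    have "(\<Sum>t\<in>signs. conditional_channel DF q k j t) = (if j = 1 then 1 else 0)" for j
      using True unfolding conditional_channel_def by (auto simp: signs_def)
    then show ?thesis
      using assms(1) by simp
  next
    case False
    then show ?thesis
      unfolding conditional_channel_def by (simp add: marginal_def sum_divide_distrib[symmetric])
  qed
qed

lemma marginal_mult_conditional_channel:
  assumes "\<forall>j\<in>{1..DF}. \<forall>s\<in>signs. 0 \<le> q i j s" and "j \<in> {1..DF}" and "s \<in> signs"
  shows "marginal DF q i * conditional_channel DF q i j s = q i j s"
  using assms marginal_eq_0_imp_eq_0[of DF q i j s] unfolding conditional_channel_def by auto

theorem proposition1:
  fixes DA DF :: nat and rho :: "nat \<Rightarrow> real" and Psi :: "nat \<Rightarrow> nat \<Rightarrow> sgn \<Rightarrow> real"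
  assumes "DA > 1" and "DF > 1"
    and "det_state DA rho"
    and "det_state2 DA DF Psi"
    and "is_dilation DA DF rho Psi"
  shows "\<exists>lam. is_channel DA DF lam \<and>
           (\<forall>i\<in>{1..DA}. \<forall>j\<in>{1..DF}. \<forall>s\<in>signs.
              apply_channel DA DF lam (Pi_state rho) i j s = Psi i j s)"
proof (intro exI conjI ballI)
  have nonneg: "\<forall>k\<in>{1..DA}. \<forall>j\<in>{1..DF}. \<forall>s\<in>signs. 0 \<le> Psi k j s"
    using assms(4) unfolding det_state2_def by blast
  show "is_channel DA DF (conditional_channel DF Psi)"
    using is_channel_conditional_channel[OF _ nonneg] assms(2) by simp
  fix i j s
  assume "i \<in> {1..DA}" "j \<in> {1..DF}" "s \<in> signs"
  moreover have "rho i = marginal DF Psi i"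
    using assms(5) \<open>i \<in> {1..DA}\<close> unfolding is_dilation_def by simp
  ultimately show "apply_channel DA DF (conditional_channel DF Psi) (Pi_state rho) i j s = Psi i j s"
    using apply_channel_Pi_state marginal_mult_conditional_channel nonneg by simp
qed

end
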